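(* If $w\ge 3$, then $m_3^{(1)}(3,w)$ equals the Griesmer upper bound, i.e. the largest integer $n$ with $n\ge g_3^{(2)}(4,n-w)$. Moreover, $m_3^{(1)}(3,2)=10$.
   Context: For a prime power $q$ and $N\ge1$, a multiset of points in $\mathrm{PG}(N,q)$ is a map $\mathcal{K}$ from the points to $\mathbb{Z}_{\ge0}$, with $\mathcal{K}(S)=\sum_{P\in S}\mathcal{K}(P)$; its cardinality is $\mathcal{K}(\mathrm{PG}(N,q))$. Dimensions are projective (lines have dimension 1). For $0\le r\le N-1$ and a positive integer $w$, $m_q^{(r)}(N,w)$ is the maximum cardinality of a multiset of points in $\mathrm{PG}(N,q)$ such that every $r$-dimensional subspace has multiplicity at most $w$. Let $v_j=(q^j-1)/(q-1)$ and, for $1\le s\le k$, $g_q^{(s)}(k,d)=d+\sum_{i=1}^{k-s}\lceil d/(q^iv_s)\rceil$. The Griesmer upper bound for $m_q^{(r)}(N,w)$ is the largest integer $n$ with $n\ge g_q^{(N-r)}(N+1,n-w)$. *)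

theory Defs
  imports Complex_Main
begin

text \<open>Vectors of the ambient space F^(N+1), where F is a field given as a type:
  functions nat => F vanishing at all indices > N (coordinates 0..N).\<close>
definition vecs :: "nat \<Rightarrow> (nat \<Rightarrow> 'a::field) set" where
  "vecs N = {v. \<forall>i>N. v i = 0}"

definition lin_comb :: "(nat \<Rightarrow> 'a::field) list \<Rightarrow> (nat \<Rightarrow> 'a) \<Rightarrow> (nat \<Rightarrow> 'a)" where
  "lin_comb vs c = (\<lambda>j. \<Sum>i<length vs. c i * (vs ! i) j)"

definition span_list :: "(nat \<Rightarrow> 'a::field) list \<Rightarrow> (nat \<Rightarrow> 'a) set" where
  "span_list vs = {lin_comb vs c | c. True}"

definition lin_indep :: "(nat \<Rightarrow> 'a::field) list \<Rightarrow> bool" where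
  "lin_indep vs \<longleftrightarrow> (\<forall>c. lin_comb vs c = (\<lambda>_. 0) \<longrightarrow> (\<forall>i<length vs. c i = 0))"

text \<open>Projective r-dimensional subspaces of PG(N,F) = linear subspaces of F^(N+1) of
  vector-space dimension r+1 (given by a basis).\<close>
definition proj_subspace :: "nat \<Rightarrow> nat \<Rightarrow> (nat \<Rightarrow> 'a::field) set \<Rightarrow> bool" where
  "proj_subspace N r S \<longleftrightarrow>
     (\<exists>vs. length vs = r + 1 \<and> set vs \<subseteq> vecs N \<and> lin_indep vs \<and> S = span_list vs)"

definition points :: "nat \<Rightarrow> (nat \<Rightarrow> 'a::field) set set" where
  "points N = {S. proj_subspace N 0 S}"

text \<open>A multiset of points is a map K from points to nat (values off points are irrelevant).
  K(S) = sum of K(P) over the points P contained in S.\<close>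
definition mult_of :: "nat \<Rightarrow> ((nat \<Rightarrow> 'a::field) set \<Rightarrow> nat) \<Rightarrow> (nat \<Rightarrow> 'a) set \<Rightarrow> nat" where
  "mult_of N K S = (\<Sum>P\<in>{P\<in>points N. P \<subseteq> S}. K P)"

definition msize :: "nat \<Rightarrow> ((nat \<Rightarrow> 'a::field) set \<Rightarrow> nat) \<Rightarrow> nat" where
  "msize N K = (\<Sum>P\<in>points N. K P)"

text \<open>m_q^(r)(N,w) over the field F = 'a (with q = CARD('a)).\<close>
definition m_max :: "'a::field itself \<Rightarrow> nat \<Rightarrow> nat \<Rightarrow> nat \<Rightarrow> nat" where
  "m_max _ r N w = Max {msize N K | K :: (nat \<Rightarrow> 'a) set \<Rightarrow> nat.
       \<forall>S. proj_subspace N r S \<longrightarrow> mult_of N K S \<le> w}"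

definition vnum :: "nat \<Rightarrow> nat \<Rightarrow> nat" where
  "vnum q j = (q ^ j - 1) div (q - 1)"

definition griesmer_g :: "nat \<Rightarrow> nat \<Rightarrow> nat \<Rightarrow> int \<Rightarrow> int" where
  "griesmer_g q s k d = d + (\<Sum>i=1..k-s. \<lceil>real_of_int d / real (q ^ i * vnum q s)\<rceil>)"

definition griesmer_ub :: "nat \<Rightarrow> nat \<Rightarrow> nat \<Rightarrow> nat \<Rightarrow> int" where
  "griesmer_ub q r N w = (GREATEST n::int. n \<ge> griesmer_g q (N - r) (N + 1) (n - int w))"

end

theory Submission imports Defs "HOL-Library.Function_Algebras" "HOL-Library.FuncSet" "HOL-Library.Cardinality" begin

definition scale :: "'a::field \<Rightarrow> (nat \<Rightarrow> 'a) \<Rightarrow> nat \<Rightarrow> 'a" where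
  "scale c v = (\<lambda>j. c * v j)"

lemma scale_apply [simp]: "scale c v j = c * v j"
  by (simp add: scale_def)

lemma scale_simps [simp]:
  "scale 0 v = 0" "scale 1 v = v" "scale c 0 = 0" "scale a (scale b v) = scale (a * b) v"
  "scale c (- v) = - scale c v" "scale (- c) v = - scale c v"
  by (auto simp: fun_eq_iff)

lemma scale_distrib:
  "scale c (x + y) = scale c x + scale c y" "scale c (x - y) = scale c x - scale c y"
  "scale (a + b) v = scale a v + scale b v" "scale (a - b) v = scale a v - scale b v"
  by (auto simp: fun_eq_iff algebra_simps)

lemma scale_eq_0_iff [simp]: "scale c v = 0 \<longleftrightarrow> c = 0 \<or> v = 0"
  by (auto simp: fun_eq_iff)

lemma lin_comb_single: "lin_comb [x] c = scale (c 0) x"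
  by (simp add: lin_comb_def fun_eq_iff)

lemma lin_comb_pair: "lin_comb [x, y] c = scale (c 0) x + scale (c 1) y"
  by (simp add: lin_comb_def fun_eq_iff lessThan_nat_numeral)

lemma lin_comb_triple: "lin_comb [x, y, z] c = scale (c 0) x + scale (c 1) y + scale (c 2) z"
  by (simp add: lin_comb_def fun_eq_iff lessThan_nat_numeral numeral_2_eq_2)

lemma span_list_single: "span_list [x] = range (\<lambda>c. scale c x)"
  by (auto simp: span_list_def lin_comb_single)

lemma span_list_pair: "span_list [x, y] = {scale s x + scale t y | s t. True}"
proof -
  have "scale s x + scale t y = lin_comb [x, y] (\<lambda>i. [s, t] ! i)" for s t
    by (simp add: lin_comb_pair)
  then show ?thesis
    unfolding span_list_def lin_comb_pair by blast
qed

lemma lin_indep_single: "lin_indep [x] \<longleftrightarrow> x \<noteq> 0"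
  by (auto simp: lin_indep_def lin_comb_single simp flip: zero_fun_def dest: spec[of _ "\<lambda>_. 1"])

lemma lin_indep_pair:
  "lin_indep [x, y] \<longleftrightarrow> (\<forall>s t. scale s x + scale t y = 0 \<longrightarrow> s = 0 \<and> t = 0)"
proof -
  have "lin_indep [x, y] \<longleftrightarrow> (\<forall>c::nat \<Rightarrow> _. scale (c 0) x + scale (c 1) y = 0 \<longrightarrow> c 0 = 0 \<and> c 1 = 0)"
    by (auto simp: lin_indep_def lin_comb_pair less_Suc_eq simp flip: zero_fun_def)
  also have "\<dots> \<longleftrightarrow> (\<forall>s t. scale s x + scale t y = 0 \<longrightarrow> s = 0 \<and> t = 0)"
    by (auto dest: spec[of _ "\<lambda>i. [_, _] ! i"])
  finally show ?thesis .
qed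

lemma lin_indep_triple:
  "lin_indep [x, y, z] \<longleftrightarrow>
     (\<forall>r s t. scale r x + scale s y + scale t z = 0 \<longrightarrow> r = 0 \<and> s = 0 \<and> t = 0)"
proof -
  have "lin_indep [x, y, z] \<longleftrightarrow> (\<forall>c::nat \<Rightarrow> _. scale (c 0) x + scale (c 1) y + scale (c 2) z = 0 \<longrightarrow>
      c 0 = 0 \<and> c 1 = 0 \<and> c 2 = 0)"
    by (auto simp: lin_indep_def lin_comb_triple less_Suc_eq numeral_2_eq_2 simp flip: zero_fun_def)
  also have "\<dots> \<longleftrightarrow> (\<forall>r s t. scale r x + scale s y + scale t z = 0 \<longrightarrow> r = 0 \<and> s = 0 \<and> t = 0)"
    by (auto dest: spec[of _ "\<lambda>i. [_, _, _] ! i"] simp: numeral_2_eq_2)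
  finally show ?thesis .
qed


definition point_of :: "(nat \<Rightarrow> 'a::field) \<Rightarrow> (nat \<Rightarrow> 'a) set" where
  "point_of v = span_list [v]"

lemma point_of_eq: "point_of v = range (\<lambda>c. scale c v)"
  by (simp add: point_of_def span_list_single)

lemma mem_point_of_self: "v \<in> point_of v"
  unfolding point_of_eq by (metis rangeI scale_simps(2))

lemma point_of_scale: "c \<noteq> 0 \<Longrightarrow> point_of (scale c v) = point_of v"
  unfolding point_of_eq by (auto simp: image_iff intro!: exI[of _ "_ / c"])

lemma point_of_uminus [simp]: "point_of (- v) = point_of v"
  using point_of_scale[of "-1" v] by simp

lemma point_of_eq_iff:
  assumes "x \<noteq> 0"
  shows "point_of x = point_of v \<longleftrightarrow> (\<exists>c. c \<noteq> 0 \<and> x = scale c v)"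
proof
  assume "point_of x = point_of v"
  then obtain c where "x = scale c v"
    using mem_point_of_self[of x] by (auto simp: point_of_eq)
  with assms show "\<exists>c. c \<noteq> 0 \<and> x = scale c v" by auto
qed (auto simp: point_of_scale)

lemma lin_indep_pair_iff_points:
  "lin_indep [x, y] \<longleftrightarrow> x \<noteq> 0 \<and> y \<noteq> 0 \<and> point_of x \<noteq> point_of y"
proof
  assume indep: "lin_indep [x, y]"
  then have "x \<noteq> 0" "y \<noteq> 0"
    unfolding lin_indep_pair
    by (metis scale_simps(1,2) add_0_right one_neq_zero, metis scale_simps(1,2) add_0 one_neq_zero)
  moreover have "point_of x \<noteq> point_of y"
  proof
    assume "point_of x = point_of y"
    then obtain c where "x = scale c y"
      using \<open>x \<noteq> 0\<close> point_of_eq_iff by blast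
    then have "scale 1 x + scale (- c) y = 0" by simp
    with indep show False unfolding lin_indep_pair by (metis one_neq_zero)
  qed
  ultimately show "x \<noteq> 0 \<and> y \<noteq> 0 \<and> point_of x \<noteq> point_of y" by blast
next
  assume distinct: "x \<noteq> 0 \<and> y \<noteq> 0 \<and> point_of x \<noteq> point_of y"
  show "lin_indep [x, y]" unfolding lin_indep_pair
  proof (intro allI impI)
    fix s t assume st: "scale s x + scale t y = 0"
    have "s = 0"
    proof (rule ccontr)
      assume "s \<noteq> 0"
      have "x = scale (- t / s) y"
      proof
        fix j
        have "s * x j + t * y j = 0" using fun_cong[OF st, of j] by simp
        with \<open>s \<noteq> 0\<close> show "x j = scale (- t / s) y j"
          by (simp add: field_simps eq_neg_iff_add_eq_0)
      qed
      moreover from this distinct have "- t / s \<noteq> 0" by auto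
      ultimately have "point_of x = point_of y" by (simp add: point_of_scale)
      with distinct show False by simp
    qed
    with st distinct show "s = 0 \<and> t = 0" by simp
  qed
qed


lemma points_eq: "points N = point_of ` (vecs N - {0 :: nat \<Rightarrow> 'a::field})"
proof -
  have "proj_subspace N 0 S \<longleftrightarrow> (\<exists>v \<in> vecs N - {0}. S = point_of v)" for S :: "(nat \<Rightarrow> 'a) set"
    by (auto simp: proj_subspace_def length_Suc_conv lin_indep_single point_of_def)
  then show ?thesis by (auto simp: points_def)
qed

lemma proj_line_iff:
  "proj_subspace N 1 S \<longleftrightarrow> (\<exists>x\<in>vecs N. \<exists>y\<in>vecs N. lin_indep [x, y] \<and> S = span_list [x, y])"
proof
  assume "proj_subspace N 1 S"
  then show "\<exists>x\<in>vecs N. \<exists>y\<in>vecs N. lin_indep [x, y] \<and> S = span_list [x, y]"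
    by (auto simp: proj_subspace_def length_Suc_conv numeral_2_eq_2) blast
next
  assume "\<exists>x\<in>vecs N. \<exists>y\<in>vecs N. lin_indep [x, y] \<and> S = span_list [x, y]"
  then obtain x y where "x \<in> vecs N" "y \<in> vecs N" "lin_indep [x, y]" "S = span_list [x, y]"
    by blast
  then show "proj_subspace N 1 S"
    unfolding proj_subspace_def by (intro exI[of _ "[x, y]"]) simp
qed

lemma vecs_closed [simp]:
  "0 \<in> vecs N"
  "x \<in> vecs N \<Longrightarrow> y \<in> vecs N \<Longrightarrow> x + y \<in> vecs N"
  "x \<in> vecs N \<Longrightarrow> y \<in> vecs N \<Longrightarrow> x - y \<in> vecs N"
  "x \<in> vecs N \<Longrightarrow> - x \<in> vecs N"
  "x \<in> vecs N \<Longrightarrow> scale c x \<in> vecs N"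
  by (auto simp: vecs_def)

lemma card_funs_supported_on:
  assumes "finite J"
  shows "card {f :: nat \<Rightarrow> 'a::{zero,finite}. \<forall>m. m \<notin> J \<longrightarrow> f m = 0} = CARD('a) ^ card J"
proof -
  define ext :: "(nat \<Rightarrow> 'a) \<Rightarrow> nat \<Rightarrow> 'a" where "ext f m = (if m \<in> J then f m else 0)" for f m
  have "inj_on ext (J \<rightarrow>\<^sub>E UNIV)"
  proof (rule inj_onI)
    fix f g assume f: "f \<in> J \<rightarrow>\<^sub>E UNIV" and g: "g \<in> J \<rightarrow>\<^sub>E UNIV" and "ext f = ext g"
    have "f i = g i" if "i \<in> J" for i
      using fun_cong[OF \<open>ext f = ext g\<close>, of i] that by (simp add: ext_def)
    with f g show "f = g" by (rule PiE_ext)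
  qed
  then have "card (ext ` (J \<rightarrow>\<^sub>E UNIV)) = CARD('a) ^ card J"
    using assms by (simp add: card_image card_PiE)
  moreover have "ext ` (J \<rightarrow>\<^sub>E UNIV) = {f. \<forall>m. m \<notin> J \<longrightarrow> f m = 0}"
  proof (intro equalityI subsetI)
    fix f :: "nat \<Rightarrow> 'a" assume "f \<in> {f. \<forall>m. m \<notin> J \<longrightarrow> f m = 0}"
    then have "f = ext (restrict f J)"
      by (simp add: ext_def fun_eq_iff)
    moreover have "restrict f J \<in> J \<rightarrow>\<^sub>E UNIV" by simp
    ultimately show "f \<in> ext ` (J \<rightarrow>\<^sub>E UNIV)" by (rule image_eqI)
  qed (auto simp: ext_def)
  ultimately show ?thesis by simp
qed

lemma card_vecs_vanishing_on:
  assumes "I \<subseteq> {..N}"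
  shows "card {v \<in> vecs N. \<forall>k\<in>I. v k = (0::'a::{field,finite})} = CARD('a) ^ (N + 1 - card I)"
proof -
  have "{v \<in> vecs N. \<forall>k\<in>I. v k = (0::'a)} = {v. \<forall>m. m \<notin> {..N} - I \<longrightarrow> v m = 0}"
    by (auto simp: vecs_def)
  moreover have "card ({..N} - I) = N + 1 - card I"
    using assms by (simp add: card_Diff_subset finite_subset)
  ultimately show ?thesis
    using card_funs_supported_on[of "{..N} - I", where 'a='a] by simp
qed

lemma card_vecs: "card (vecs N :: (nat \<Rightarrow> 'a::{field,finite}) set) = CARD('a) ^ (N + 1)"
  using card_vecs_vanishing_on[of "{}" N] by simp

lemma finite_vecs [simp]: "finite (vecs N :: (nat \<Rightarrow> 'a::{field,finite}) set)"
  by (rule card_ge_0_finite) (simp add: card_vecs)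

lemma finite_points [simp]: "finite (points N :: (nat \<Rightarrow> 'a::{field,finite}) set set)"
  by (simp add: points_eq)


definition vec_mult :: "((nat \<Rightarrow> 'a::field) set \<Rightarrow> nat) \<Rightarrow> (nat \<Rightarrow> 'a) \<Rightarrow> nat" where
  "vec_mult K x = (if x = 0 then 0 else K (point_of x))"

lemma vec_mult_uminus [simp]: "vec_mult K (- x) = vec_mult K x"
  by (simp add: vec_mult_def)

lemma vec_mult_diff_commute: "vec_mult K (y - x) = vec_mult K (x - y)"
  by (metis minus_diff_eq vec_mult_uminus)

lemma vec_mult_uminus_diff [simp]: "vec_mult K (- x - y) = vec_mult K (x + y)"
  by (metis minus_add_distrib diff_conv_add_uminus vec_mult_uminus)

lemma vec_mult_zero [simp]: "vec_mult K 0 = 0"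
  by (simp add: vec_mult_def)

lemma vec_mult_nonzero: "x \<noteq> 0 \<Longrightarrow> vec_mult K x = K (point_of x)"
  by (simp add: vec_mult_def)

lemma points_within:
  assumes "S \<subseteq> vecs N" and closed: "\<And>c x. x \<in> S \<Longrightarrow> scale c x \<in> S"
  shows "{P \<in> points N. P \<subseteq> S} = point_of ` (S - {0})"
proof (intro equalityI subsetI)
  fix P assume "P \<in> {P \<in> points N. P \<subseteq> S}"
  then obtain v where "v \<in> vecs N - {0}" "P = point_of v" "P \<subseteq> S"
    by (auto simp: points_eq)
  then show "P \<in> point_of ` (S - {0})"
    using mem_point_of_self[of v] by blast
next
  fix P assume "P \<in> point_of ` (S - {0})"
  then obtain x where "x \<in> S - {0}" "P = point_of x" by blast
  with assms show "P \<in> {P \<in> points N. P \<subseteq> S}"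
    by (auto simp: points_eq point_of_eq)
qed

lemma card_point_fiber:
  fixes v :: "nat \<Rightarrow> 'a::{field,finite}"
  assumes "v \<in> S" "v \<noteq> 0" and closed: "\<And>c x. x \<in> S \<Longrightarrow> scale c x \<in> S"
  shows "card {x \<in> S - {0}. point_of x = point_of v} = CARD('a) - 1"
proof -
  have "{x \<in> S - {0}. point_of x = point_of v} = (\<lambda>c. scale c v) ` (UNIV - {0})"
    using assms by (auto simp: point_of_eq_iff point_of_scale)
  moreover have "inj_on (\<lambda>c. scale c v) (UNIV - {0})"
  proof (rule inj_onI)
    fix c d assume "scale c v = scale d v"
    then have "scale (c - d) v = 0" by (simp add: scale_distrib)
    with \<open>v \<noteq> 0\<close> show "c = d" by simp
  qed
  ultimately show ?thesis
    by (simp add: card_image card_Diff_singleton)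
qed

lemma mult_of_eq_vec_sum:
  fixes K :: "(nat \<Rightarrow> 'a::{field,finite}) set \<Rightarrow> nat"
  assumes "S \<subseteq> vecs N" and closed: "\<And>c x. x \<in> S \<Longrightarrow> scale c x \<in> S"
  shows "(CARD('a) - 1) * mult_of N K S = (\<Sum>x\<in>S. vec_mult K x)"
proof -
  have fin: "finite S"
    using assms(1) finite_vecs by (rule finite_subset)
  have "(\<Sum>x\<in>S. vec_mult K x) = (\<Sum>x\<in>S - {0}. K (point_of x))"
    using fin by (rule sum.mono_neutral_cong_right) (auto simp: vec_mult_def)
  also have "\<dots> = (\<Sum>P \<in> point_of ` (S - {0}). \<Sum>x \<in> {x \<in> S - {0}. point_of x = P}. K (point_of x))"
    using fin by (intro sum.image_gen[of "S - {0}"]) simp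
  also have "\<dots> = (\<Sum>P \<in> point_of ` (S - {0}). (CARD('a) - 1) * K P)"
  proof (rule sum.cong)
    fix P assume "P \<in> point_of ` (S - {0})"
    then obtain v where v: "v \<in> S" "v \<noteq> 0" "P = point_of v" by blast
    have "(\<Sum>x \<in> {x \<in> S - {0}. point_of x = P}. K (point_of x))
        = (\<Sum>x \<in> {x \<in> S - {0}. point_of x = P}. K P)"
      by (rule sum.cong) auto
    also have "\<dots> = (CARD('a) - 1) * K P"
      using card_point_fiber[OF v(1,2) closed] v(3) by simp
    finally show "(\<Sum>x \<in> {x \<in> S - {0}. point_of x = P}. K (point_of x)) = (CARD('a) - 1) * K P" .
  qed simp
  also have "\<dots> = (CARD('a) - 1) * mult_of N K S"
    by (simp add: mult_of_def points_within[OF assms] sum_distrib_left)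
  finally show ?thesis ..
qed

lemma msize_eq_mult_of_vecs: "msize N K = mult_of N K (vecs N)"
proof -
  have all: "{P \<in> points N. P \<subseteq> vecs N} = points N"
    by (auto simp: points_eq point_of_eq)
  show ?thesis
    unfolding msize_def mult_of_def all ..
qed

lemma msize_eq_vec_sum:
  fixes K :: "(nat \<Rightarrow> 'a::{field,finite}) set \<Rightarrow> nat"
  shows "(CARD('a) - 1) * msize N K = (\<Sum>x\<in>vecs N. vec_mult K x)"
  unfolding msize_eq_mult_of_vecs by (rule mult_of_eq_vec_sum) auto

lemma card_points:
  "(CARD('a) - 1) * card (points N :: (nat \<Rightarrow> 'a::{field,finite}) set set) = CARD('a) ^ (N + 1) - 1"
proof -
  have "(CARD('a) - 1) * card (points N :: (nat \<Rightarrow> 'a) set set) = (\<Sum>x\<in>vecs N. vec_mult (\<lambda>_. 1) (x :: nat \<Rightarrow> 'a))"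
    using msize_eq_vec_sum[where K = "\<lambda>_. 1" and N = N] by (simp add: msize_def)
  also have "\<dots> = card (vecs N - {0 :: nat \<Rightarrow> 'a})"
    by (simp add: vec_mult_def sum.If_cases Diff_eq)
  also have "\<dots> = CARD('a) ^ (N + 1) - 1"
    by (simp add: card_Diff_singleton card_vecs)
  finally show ?thesis .
qed


definition bounded_on_subspaces :: "nat \<Rightarrow> nat \<Rightarrow> ((nat \<Rightarrow> 'a::field) set \<Rightarrow> nat) \<Rightarrow> nat \<Rightarrow> bool" where
  "bounded_on_subspaces N r K w \<longleftrightarrow> (\<forall>S. proj_subspace N r S \<longrightarrow> mult_of N K S \<le> w)"

lemma m_max_eqI:
  fixes K\<^sub>0 :: "(nat \<Rightarrow> 'a::field) set \<Rightarrow> nat"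
  assumes upper: "\<And>K :: (nat \<Rightarrow> 'a) set \<Rightarrow> nat. bounded_on_subspaces N r K w \<Longrightarrow> msize N K \<le> m"
    and "bounded_on_subspaces N r K\<^sub>0 w" and "msize N K\<^sub>0 = m"
  shows "m_max TYPE('a) r N w = m"
proof -
  let ?A = "{msize N K | K :: (nat \<Rightarrow> 'a) set \<Rightarrow> nat. bounded_on_subspaces N r K w}"
  have "finite ?A"
    using upper by (intro finite_subset[of ?A "{..m}"]) auto
  moreover have "m \<in> ?A"
    using assms(2,3) by auto
  ultimately have "Max ?A = m"
    using upper by (intro Max_eqI) auto
  then show ?thesis
    by (simp add: m_max_def bounded_on_subspaces_def)
qed

lemma mult_of_add: "mult_of N (\<lambda>P. K P + L P) S = mult_of N K S + mult_of N L S"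
  by (simp add: mult_of_def sum.distrib)

lemma mult_of_cmult: "mult_of N (\<lambda>P. c * K P) S = c * mult_of N K S"
  by (simp add: mult_of_def sum_distrib_left)

lemma msize_add: "msize N (\<lambda>P. K P + L P) = msize N K + msize N L"
  by (simp add: msize_def sum.distrib)

lemma msize_cmult: "msize N (\<lambda>P. c * K P) = c * msize N K"
  by (simp add: msize_def sum_distrib_left)

lemma mult_of_point_indicator_le: "mult_of N (\<lambda>P. of_bool (P = P\<^sub>0)) S \<le> 1"
  unfolding mult_of_def by (cases "finite {P \<in> points N. P \<subseteq> S}") (simp_all add: of_bool_def)

lemma msize_point_indicator:
  "P\<^sub>0 \<in> points N \<Longrightarrow> msize N (\<lambda>P. of_bool (P = P\<^sub>0)) = (1 :: nat)"
  for P\<^sub>0 :: "(nat \<Rightarrow> 'a::{field,finite}) set"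
  unfolding msize_def by (simp add: of_bool_def)

lemma point_of_off_hyperplane_iff: "(\<exists>v\<in>point_of x. v k \<noteq> 0) \<longleftrightarrow> x k \<noteq> 0"
  by (auto simp: point_of_eq)

lemma span_list_pair_subset_vecs: "x \<in> vecs N \<Longrightarrow> y \<in> vecs N \<Longrightarrow> span_list [x, y] \<subseteq> vecs N"
  by (auto simp: span_list_pair)

lemma scale_mem_span_list_pair: "v \<in> span_list [x, y] \<Longrightarrow> scale c v \<in> span_list [x, y]"
  by (auto simp: span_list_pair scale_distrib) blast

lemma sum_span_list_pair:
  fixes x y :: "nat \<Rightarrow> 'a::{field,finite}"
  assumes "lin_indep [x, y]"
  shows "(\<Sum>v\<in>span_list [x, y]. f v) = (\<Sum>s\<in>UNIV. \<Sum>t\<in>UNIV. f (scale s x + scale t y))"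
proof -
  have "inj (\<lambda>(s, t). scale s x + scale t y)"
  proof (rule injI, clarify)
    fix s t s' t' assume "scale s x + scale t y = scale s' x + scale t' y"
    then have "scale (s - s') x + scale (t - t') y = 0"
      by (simp add: scale_distrib algebra_simps)
    with assms have "s - s' = 0 \<and> t - t' = 0"
      unfolding lin_indep_pair by blast
    then show "s = s' \<and> t = t'" by simp
  qed
  moreover have "span_list [x, y] = (\<lambda>(s, t). scale s x + scale t y) ` UNIV"
    by (auto simp: span_list_pair)
  ultimately show ?thesis
    by (simp add: sum.reindex sum.cartesian_product prod.case_distrib)
qed

lemma line_meets_coordinate_hyperplane:
  assumes "lin_indep [x, y]"
  shows "\<exists>s t. scale s x + scale t y \<noteq> 0 \<and> (scale s x + scale t y) k = 0"
proof (cases "x k = 0 \<and> y k = 0")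
  case True
  with assms show ?thesis
    by (intro exI[of _ 1] exI[of _ 0]) (auto simp: lin_indep_pair_iff_points)
next
  case False
  then have "\<not> (- y k = 0 \<and> x k = 0)" by auto
  with assms have "scale (- y k) x + scale (x k) y \<noteq> 0"
    unfolding lin_indep_pair by blast
  moreover have "(scale (- y k) x + scale (x k) y) k = 0"
    by (simp add: mult.commute)
  ultimately show ?thesis by blast
qed

lemma lin_indep_pair_minor:
  assumes "lin_indep [a, b]"
  shows "\<exists>i j. a i * b j - a j * b i \<noteq> 0"
proof -
  obtain i where i: "a i \<noteq> 0"
    using assms by (auto simp: lin_indep_pair_iff_points fun_eq_iff)
  define b' where "b' = b - scale (b i / a i) a"
  have "b' \<noteq> 0"
    using assms unfolding b'_def lin_indep_pair
    by (metis add.commute diff_conv_add_uminus eq_iff_diff_eq_0 one_neq_zero scale_simps(2,6))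
  then obtain j where j: "b' j \<noteq> 0"
    by (auto simp: fun_eq_iff)
  have "a i * b j - a j * b i = a i * b' j"
    using i by (simp add: b'_def field_simps)
  with i j show ?thesis
    by (intro exI[of _ i] exI[of _ j]) simp
qed

lemma cramer_2:
  fixes \<alpha> \<beta> :: "'a::field"
  assumes "\<alpha> * p + \<beta> * q = 0" "\<alpha> * p' + \<beta> * q' = 0" "p * q' - p' * q \<noteq> 0"
  shows "\<alpha> = 0 \<and> \<beta> = 0"
proof -
  have "\<alpha> * (p * q' - p' * q) = 0" "\<beta> * (p * q' - p' * q) = 0"
    using assms(1,2) by algebra+
  with assms(3) show ?thesis by simp
qed


lemma inj_on_card_eq_imp_bij_betw:
  assumes "finite B" "inj_on f A" "f ` A \<subseteq> B" "card A = card B"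
  shows "bij_betw f A B"
  using assms by (simp add: bij_betw_def card_image card_subset_eq)

lemma sum_over_decomposition:
  assumes "bij_betw (\<lambda>(p, h). \<phi> p h) (A \<times> H) V"
  shows "(\<Sum>x\<in>V. f x) = (\<Sum>h\<in>H. \<Sum>p\<in>A. f (\<phi> p h))"
proof -
  have "(\<Sum>x\<in>V. f x) = (\<Sum>(p, h)\<in>A \<times> H. f (\<phi> p h))"
    using sum.reindex_bij_betw[OF assms, of f] by (simp add: prod.case_distrib)
  also have "\<dots> = (\<Sum>p\<in>A. \<Sum>h\<in>H. f (\<phi> p h))"
    by (simp add: sum.cartesian_product)
  finally show ?thesis
    by (simp add: sum.swap[of _ A])
qed

lemma bij_betw_line_decomposition:
  fixes u :: "nat \<Rightarrow> 'a::{field,finite}"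
  assumes "u \<in> vecs N" "i \<le> N" "u i \<noteq> 0"
  shows "bij_betw (\<lambda>(c, h). scale c u + h) (UNIV \<times> {h \<in> vecs N. h i = 0}) (vecs N)"
proof (rule inj_on_card_eq_imp_bij_betw)
  have unique: "c = c' \<and> h = h'"
    if h: "h i = 0" "h' i = 0" and eq: "scale c u + h = scale c' u + h'" for c c' and h h'
  proof -
    have "c * u i = c' * u i"
      using fun_cong[OF eq, of i] h by simp
    with \<open>u i \<noteq> 0\<close> have "c = c'" by simp
    with eq show ?thesis by simp
  qed
  then show "inj_on (\<lambda>(c, h). scale c u + h) (UNIV \<times> {h \<in> vecs N. h i = 0})"
    by (intro inj_onI) (clarify; rule unique; assumption)
  have "card {h \<in> vecs N. h i = (0::'a)} = CARD('a) ^ N"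
    using card_vecs_vanishing_on[of "{i}" N] assms(2) by simp
  then show "card ((UNIV :: 'a set) \<times> {h \<in> vecs N. h i = (0::'a)}) = card (vecs N :: (nat \<Rightarrow> 'a) set)"
    by (simp add: card_cartesian_product card_vecs)
qed (use assms(1) in auto)

lemma bij_betw_plane_decomposition:
  fixes a b :: "nat \<Rightarrow> 'a::{field,finite}"
  assumes "a \<in> vecs N" "b \<in> vecs N" "i \<le> N" "j \<le> N" and minor: "a i * b j - a j * b i \<noteq> 0"
  shows "bij_betw (\<lambda>((s, t), h). scale s a + scale t b + h)
           ((UNIV \<times> UNIV) \<times> {h \<in> vecs N. h i = 0 \<and> h j = 0}) (vecs N)"
proof (rule inj_on_card_eq_imp_bij_betw)
  have unique: "(s, t) = (s', t') \<and> h = h'"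
    if h: "h i = 0" "h j = 0" "h' i = 0" "h' j = 0"
      and eq: "scale s a + scale t b + h = scale s' a + scale t' b + h'" for s t s' t' and h h'
  proof -
    have "(s - s') * a i + (t - t') * b i = 0" "(s - s') * a j + (t - t') * b j = 0"
      using fun_cong[OF eq, of i] fun_cong[OF eq, of j] h by (simp_all add: algebra_simps)
    with minor have "s = s'" "t = t'"
      using cramer_2 by (metis eq_iff_diff_eq_0)+
    with eq show ?thesis by simp
  qed
  then show "inj_on (\<lambda>((s, t), h). scale s a + scale t b + h) ((UNIV \<times> UNIV) \<times> {h \<in> vecs N. h i = 0 \<and> h j = 0})"
    by (intro inj_onI) (clarify; rule unique; assumption)
  have "i \<noteq> j"
    using minor by auto
  with assms(3,4) obtain n where N: "N = Suc n"
    by (cases N) auto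
  have "card {h \<in> vecs N. h i = 0 \<and> h j = (0::'a)} = CARD('a) ^ n"
    using card_vecs_vanishing_on[of "{i, j}" N] \<open>i \<noteq> j\<close> assms(3,4) N by simp
  then show "card (((UNIV :: 'a set) \<times> (UNIV :: 'a set)) \<times> {h \<in> vecs N. h i = 0 \<and> h j = (0::'a)})
      = card (vecs N :: (nat \<Rightarrow> 'a) set)"
    by (simp add: card_cartesian_product card_vecs N)
qed (use assms(1,2) in auto)


definition quadric_form :: "(nat \<Rightarrow> 'a::field) \<Rightarrow> 'a" where
  "quadric_form v = v 0 * v 0 + v 1 * v 1 + v 2 * v 3"

definition polar_form :: "(nat \<Rightarrow> 'a::field) \<Rightarrow> (nat \<Rightarrow> 'a) \<Rightarrow> 'a" where
  "polar_form x y = 2 * x 0 * y 0 + 2 * x 1 * y 1 + x 2 * y 3 + x 3 * y 2"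

lemma quadric_form_comb:
  "quadric_form (scale s x + scale t y) = s * s * quadric_form x + s * t * polar_form x y + t * t * quadric_form y"
  unfolding quadric_form_def polar_form_def by (simp add: algebra_simps)

definition elliptic_quadric :: "(nat \<Rightarrow> 'a::field) set \<Rightarrow> nat" where
  "elliptic_quadric P = of_bool (\<exists>v\<in>P. v \<noteq> 0 \<and> quadric_form v = 0)"

lemma elliptic_quadric_point_of:
  assumes "x \<noteq> 0"
  shows "elliptic_quadric (point_of x) = of_bool (quadric_form x = 0)"
proof -
  have "quadric_form (scale c x) = c * c * quadric_form x" for c
    using quadric_form_comb[of c x 0 x] by simp
  then show ?thesis
    using assms mem_point_of_self[of x] by (auto simp: elliptic_quadric_def point_of_eq)
qed

definition vec4 :: "'a \<Rightarrow> 'a \<Rightarrow> 'a \<Rightarrow> 'a \<Rightarrow> nat \<Rightarrow> 'a::zero" where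
  "vec4 p q r t = (\<lambda>i. if i = 0 then p else if i = 1 then q else if i = 2 then r else if i = 3 then t else 0)"

lemma vec4_apply [simp]:
  "vec4 p q r t 0 = p" "vec4 p q r t (Suc 0) = q" "vec4 p q r t 2 = r" "vec4 p q r t 3 = t"
  by (simp_all add: vec4_def)

lemma vec4_mem_vecs: "vec4 p q r t \<in> vecs 3"
  by (simp add: vec4_def vecs_def)

lemma vec4_eta: "v \<in> vecs 3 \<Longrightarrow> vec4 (v 0) (v 1) (v 2) (v 3) = v"
  by (auto simp: vec4_def vecs_def fun_eq_iff)

lemma vec4_eq_iff: "vec4 p q r t = vec4 p' q' r' t' \<longleftrightarrow> p = p' \<and> q = q' \<and> r = r' \<and> t = t'"
  by (metis vec4_apply)

lemma vec4_zero [simp]: "vec4 0 0 0 0 = 0"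
  by (simp add: vec4_def fun_eq_iff)

lemma vec4_eq_0_iff: "vec4 p q r t = 0 \<longleftrightarrow> p = 0 \<and> q = 0 \<and> r = 0 \<and> t = 0"
  using vec4_eq_iff[of p q r t 0 0 0 0] by simp

lemma lin_indep_pair_nonzero:
  assumes "lin_indep [x, y]"
  shows "x \<noteq> 0" "y \<noteq> 0" "x + y \<noteq> 0" "x - y \<noteq> 0"
proof -
  have "scale 1 x + scale 0 y \<noteq> 0" "scale 0 x + scale 1 y \<noteq> 0"
      "scale 1 x + scale 1 y \<noteq> 0" "scale 1 x + scale (- 1) y \<noteq> 0"
    using assms unfolding lin_indep_pair by (metis one_neq_zero)+
  then show "x \<noteq> 0" "y \<noteq> 0" "x + y \<noteq> 0" "x - y \<noteq> 0"
    by simp_all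
qed

lemma nonzero_coordinate: "u \<in> vecs N \<Longrightarrow> u \<noteq> 0 \<Longrightarrow> \<exists>i\<le>N. u i \<noteq> 0"
  by (auto simp: vecs_def fun_eq_iff) (metis not_le)

lemma griesmer_g_excess_mono:
  assumes "d \<le> e"
  shows "griesmer_g q s k d - d \<le> griesmer_g q s k e - e"
  unfolding griesmer_g_def using assms
  by (simp add: sum_mono ceiling_mono divide_right_mono)

lemma griesmer_ub_eqI:
  assumes "griesmer_g q (N - r) (N + 1) (n - int w) \<le> n"
    and "n + 1 < griesmer_g q (N - r) (N + 1) (n + 1 - int w)"
  shows "griesmer_ub q r N w = n"
  unfolding griesmer_ub_def
proof (rule Greatest_equality)
  fix m assume m: "griesmer_g q (N - r) (N + 1) (m - int w) \<le> m"
  show "m \<le> n"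
  proof (rule ccontr)
    assume "\<not> m \<le> n"
    then have "griesmer_g q (N - r) (N + 1) (n + 1 - int w) - (n + 1 - int w)
        \<le> griesmer_g q (N - r) (N + 1) (m - int w) - (m - int w)"
      by (intro griesmer_g_excess_mono) simp
    with assms(2) m show False by simp
  qed
qed (rule assms(1))

lemma griesmer_g_3_2_4:
  "griesmer_g 3 2 4 d = d + \<lceil>real_of_int d / 12\<rceil> + \<lceil>real_of_int d / 36\<rceil>"
proof -
  have "vnum 3 2 = 4" by (simp add: vnum_def)
  then show ?thesis
    by (simp add: griesmer_g_def numeral_2_eq_2)
qed

lemma div_4_ceiling_bounds:
  fixes w :: nat
  shows "w \<le> 4 * ((w + 3) div 4)" "4 * ((w + 3) div 4) \<le> w + 3"
  using mult_div_mod_eq[of 4 "w + 3"] mod_less_divisor[of 4 "w + 3"] by linarith+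

lemma griesmer_ub_3_1_3: "griesmer_ub 3 1 3 w = int (13 * w - 12 * ((w + 3) div 4))"
proof -
  define c where "c = (w + 3) div 4"
  define m where "m = int w - int c"
  have "w \<le> 4 * c" "4 * c \<le> w + 3"
    unfolding c_def by (rule div_4_ceiling_bounds)+
  then have m: "real_of_int m \<le> 3 * real c" "3 * real c \<le> real_of_int m + 3"
    unfolding m_def by linarith+
  have "12 * c \<le> 13 * w"
    using \<open>4 * c \<le> w + 3\<close> by (cases "w = 0") (simp add: c_def, linarith)
  then have n: "int (13 * w - 12 * c) = int w + 12 * m"
    unfolding m_def by simp
  have w: "int w = m + int c"
    by (simp add: m_def)
  have "griesmer_g 3 2 4 (12 * m) \<le> int w + 12 * m"
  proof -
    have "\<lceil>real_of_int (12 * m) / 12\<rceil> = m"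
      by simp
    moreover have "\<lceil>real_of_int (12 * m) / 36\<rceil> \<le> int c"
      using m by (simp add: ceiling_le_iff)
    ultimately show ?thesis
      unfolding griesmer_g_3_2_4 using w by linarith
  qed
  moreover have "int w + 12 * m + 1 < griesmer_g 3 2 4 (12 * m + 1)"
  proof -
    have "m < \<lceil>real_of_int (12 * m + 1) / 12\<rceil>" "int c - 1 < \<lceil>real_of_int (12 * m + 1) / 36\<rceil>"
      using m by (simp_all add: less_ceiling_iff)
    then show ?thesis
      unfolding griesmer_g_3_2_4 using w by linarith
  qed
  ultimately show ?thesis
    unfolding c_def[symmetric] by (intro griesmer_ub_eqI) (simp_all add: n add.commute)
qed

locale gf3 =
  fixes field_type :: "'a::{field,finite} itself"
  assumes card_UNIV: "CARD('a) = 3"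
begin

lemma one_neq_minus_one [simp]: "(1::'a) \<noteq> -1"
proof
  assume char2: "(1::'a) = -1"
  have "{0, 1::'a} \<noteq> UNIV"
  proof
    assume "{0, 1::'a} = UNIV"
    then have "CARD('a) = card {0, 1::'a}" by simp
    with card_UNIV show False by simp
  qed
  then obtain t :: 'a where t: "t \<noteq> 0" "t \<noteq> 1"
    by blast
  have "{0, 1, t} = UNIV"
    by (rule card_subset_eq) (use t card_UNIV in auto)
  then have "t + 1 \<in> {0, 1, t}"
    by blast
  moreover have "t + 1 \<noteq> 0"
    using t(2) char2 by (metis add.commute add_eq_0_iff)
  ultimately show False
    using t(1) by auto
qed

lemma UNIV_eq: "(UNIV :: 'a set) = {0, 1, -1}"
  by (rule card_subset_eq[symmetric]) (use card_UNIV in auto)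

lemma nonzero_cases: "(c::'a) \<noteq> 0 \<Longrightarrow> c = 1 \<or> c = -1"
  using UNIV_eq by blast

lemma sum_UNIV: "(\<Sum>c\<in>UNIV. f (c::'a)) = f 0 + f 1 + f (-1)"
  by (simp add: UNIV_eq add.assoc)

lemma two_eq_minus_one [simp]: "(2::'a) = -1"
proof -
  have "(2::'a) \<in> {0, 1, -1}"
    using UNIV_eq by blast
  moreover have "(2::'a) \<noteq> 0"
    using one_neq_minus_one by (metis one_add_one add_eq_0_iff)
  moreover have "(2::'a) \<noteq> 1"
    by (metis one_add_one add_cancel_right_right one_neq_zero)
  ultimately show ?thesis by blast
qed

lemma three_eq_zero [simp]: "(3::'a) = 0"
proof -
  have "(3::'a) = 2 + 1" by (simp del: two_eq_minus_one)
  also have "\<dots> = 0" by simp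
  finally show ?thesis .
qed

lemma nonzero_eq_or_opposite: "(p::'a) \<noteq> 0 \<Longrightarrow> q \<noteq> 0 \<Longrightarrow> q = p \<or> q = - p"
  using nonzero_cases[of p] nonzero_cases[of q] by auto

lemma distinct_sum_zero:
  assumes "(p::'a) \<noteq> q" "p \<noteq> r" "q \<noteq> r"
  shows "p + q + r = 0"
proof -
  have "p \<in> {0, 1, -1}" "q \<in> {0, 1, -1}" "r \<in> {0, 1, -1}"
    using UNIV_eq by blast+
  with assms show ?thesis by auto
qed

lemma sum_squares_eq_0: "(p::'a) * p + q * q = 0 \<Longrightarrow> p = 0 \<and> q = 0"
proof -
  have "p \<in> {0, 1, -1}" "q \<in> {0, 1, -1}"
    using UNIV_eq by blast+
  then show "p * p + q * q = 0 \<Longrightarrow> p = 0 \<and> q = 0"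
    by (elim insertE emptyE) (simp_all add: add_eq_0_iff)
qed


lemma double_mult_of:
  assumes "S \<subseteq> vecs N" "\<And>c x. x \<in> S \<Longrightarrow> scale c x \<in> S"
  shows "2 * mult_of N K S = (\<Sum>x\<in>S. vec_mult K (x :: nat \<Rightarrow> 'a))"
  using mult_of_eq_vec_sum[OF assms, of K] card_UNIV by simp

lemma double_msize: "2 * msize N K = (\<Sum>x\<in>vecs N. vec_mult K (x :: nat \<Rightarrow> 'a))"
  using msize_eq_vec_sum[of N K] card_UNIV by simp

lemma mult_of_line:
  fixes x y :: "nat \<Rightarrow> 'a"
  assumes "x \<in> vecs N" "y \<in> vecs N" and indep: "lin_indep [x, y]"
  shows "mult_of N K (span_list [x, y])
           = K (point_of x) + K (point_of y) + K (point_of (x + y)) + K (point_of (x - y))"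
proof -
  have sum_line: "(\<Sum>s\<in>UNIV. \<Sum>t\<in>UNIV. vec_mult K (scale s x + scale t y))
      = 2 * (K (point_of x) + K (point_of y) + K (point_of (x + y)) + K (point_of (x - y)))"
    using lin_indep_pair_nonzero[OF indep]
    by (simp add: sum_UNIV vec_mult_nonzero vec_mult_diff_commute[of K y x])
  have "2 * mult_of N K (span_list [x, y]) = (\<Sum>v\<in>span_list [x, y]. vec_mult K v)"
    using assms(1,2) by (intro double_mult_of span_list_pair_subset_vecs scale_mem_span_list_pair)
  also have "\<dots> = (\<Sum>s\<in>UNIV. \<Sum>t\<in>UNIV. vec_mult K (scale s x + scale t y))"
    by (rule sum_span_list_pair[OF indep])
  finally show ?thesis
    unfolding sum_line by simp
qed

lemma bounded_on_lines_iff: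
  "bounded_on_subspaces N 1 K w \<longleftrightarrow>
     (\<forall>x\<in>vecs N. \<forall>y\<in>vecs N. lin_indep [x, y] \<longrightarrow>
        K (point_of x) + K (point_of y) + K (point_of (x + y)) + K (point_of (x - (y :: nat \<Rightarrow> 'a))) \<le> w)"
  unfolding bounded_on_subspaces_def proj_line_iff
proof (intro iffI ballI impI allI)
  fix x y :: "nat \<Rightarrow> 'a"
  assume "\<forall>S. (\<exists>x\<in>vecs N. \<exists>y\<in>vecs N. lin_indep [x, y] \<and> S = span_list [x, y]) \<longrightarrow> mult_of N K S \<le> w"
    and line: "x \<in> vecs N" "y \<in> vecs N" "lin_indep [x, y]"
  then have "mult_of N K (span_list [x, y]) \<le> w" by blast
  with line show "K (point_of x) + K (point_of y) + K (point_of (x + y)) + K (point_of (x - y)) \<le> w"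
    by (simp add: mult_of_line)
qed (auto simp: mult_of_line)

lemma bounded_on_linesD:
  assumes "bounded_on_subspaces N 1 K w" "x \<in> vecs N" "y \<in> vecs N" "lin_indep [x, y]"
  shows "K (point_of x) + K (point_of y) + K (point_of (x + y)) + K (point_of (x - (y :: nat \<Rightarrow> 'a))) \<le> w"
  using assms bounded_on_lines_iff by blast

lemma point_star_bound:
  fixes u :: "nat \<Rightarrow> 'a"
  assumes bounded: "bounded_on_subspaces N 1 K w" and u: "u \<in> vecs N" "u \<noteq> 0"
  shows "2 * msize N K + (3 ^ N - 1) * K (point_of u) \<le> (3 ^ N - 1) * w + 2 * K (point_of u)"
proof -
  obtain i where i: "i \<le> N" "u i \<noteq> 0"
    using nonzero_coordinate[OF u] by blast
  define H where "H = {h \<in> vecs N. h i = (0::'a)}"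
  define R where "R h = (\<Sum>c\<in>UNIV. vec_mult K (scale c u + h))" for h
  have H0: "0 \<in> H" and finH: "finite H"
    by (simp_all add: H_def)
  have "card H = 3 ^ N"
    using card_vecs_vanishing_on[of "{i}" N, where 'a = 'a] i(1) card_UNIV by (simp add: H_def)
  then have card_H: "card (H - {0}) = 3 ^ N - 1"
    using H0 finH by (simp add: card_Diff_singleton)
  have "2 * msize N K = (\<Sum>h\<in>H. R h)"
    unfolding double_msize R_def H_def
    using bij_betw_line_decomposition[OF u(1) i] by (rule sum_over_decomposition)
  also have "\<dots> = R 0 + (\<Sum>h\<in>H - {0}. R h)"
    using finH H0 by (rule sum.remove)
  also have "R 0 = 2 * K (point_of u)"
    using u(2) by (simp add: R_def sum_UNIV vec_mult_nonzero)
  finally have msize_eq: "2 * msize N K = 2 * K (point_of u) + (\<Sum>h\<in>H - {0}. R h)" .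
  have "R h + K (point_of u) \<le> w" if "h \<in> H - {0}" for h
  proof -
    have h: "h \<in> vecs N" "h i = 0" "h \<noteq> 0"
      using that by (auto simp: H_def)
    have "lin_indep [u, h]" unfolding lin_indep_pair
    proof (intro allI impI)
      fix s t assume st: "scale s u + scale t h = 0"
      have "s * u i = 0"
        using fun_cong[OF st, of i] h(2) by simp
      with i(2) have "s = 0" by simp
      with st h(3) show "s = 0 \<and> t = 0" by simp
    qed
    moreover have "R h = K (point_of h) + K (point_of (u + h)) + K (point_of (u - h))"
      using lin_indep_pair_nonzero[OF \<open>lin_indep [u, h]\<close>]
      by (simp add: R_def sum_UNIV vec_mult_nonzero vec_mult_diff_commute[of K h u] add.commute)
    ultimately show ?thesis
      using bounded_on_linesD[OF bounded u(1) h(1)] by simp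
  qed
  then have "(\<Sum>h\<in>H - {0}. R h + K (point_of u)) \<le> (3 ^ N - 1) * w"
    using sum_bounded_above[of "H - {0}" "\<lambda>h. R h + K (point_of u)" w] card_H by simp
  then show ?thesis
    using msize_eq card_H by (simp add: sum.distrib)
qed

lemma card_points_3: "card (points 3 :: (nat \<Rightarrow> 'a) set set) = 40"
  using card_points[where 'a = 'a and N = 3] card_UNIV by simp

lemma msize_le_griesmer:
  fixes K :: "(nat \<Rightarrow> 'a) set \<Rightarrow> nat"
  assumes bounded: "bounded_on_subspaces 3 1 K w"
  shows "msize 3 K + 12 * ((w + 3) div 4) \<le> 13 * w"
proof -
  define M where "M = Max (K ` points 3)"
  have "points 3 \<noteq> ({} :: (nat \<Rightarrow> 'a) set set)"
    using card_points_3 by auto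
  then have "M \<in> K ` points 3"
    unfolding M_def by (intro Max_in) simp_all
  then obtain P where "P \<in> points 3" "K P = M"
    by auto
  then obtain u where u: "u \<in> vecs 3" "u \<noteq> 0" "K (point_of u) = M"
    by (auto simp: points_eq)
  have "K P \<le> M" if "P \<in> points 3" for P
    unfolding M_def using that by simp
  then have "msize 3 K \<le> card (points 3 :: (nat \<Rightarrow> 'a) set set) * M"
    unfolding msize_def using sum_bounded_above[of "points 3" K M] by simp
  then have few_points: "msize 3 K \<le> 40 * M"
    by (simp add: card_points_3)
  have star: "2 * msize 3 K + 26 * M \<le> 26 * w + 2 * M"
    using point_star_bound[OF bounded u(1,2)] u(3) by simp
  note ceil = div_4_ceiling_bounds[of w]
  show ?thesis
  proof (cases "w \<le> 4 * M")
    case True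
    then have "(w + 3) div 4 \<le> M"
      using ceil by linarith
    with star show ?thesis by linarith
  next
    case False
    with few_points ceil show ?thesis by linarith
  qed
qed

lemma mult_of_line_uniform:
  assumes "x \<in> vecs N" "y \<in> vecs N" "lin_indep [x, (y :: nat \<Rightarrow> 'a)]"
  shows "mult_of N (\<lambda>_. 1) (span_list [x, y]) = 4"
  using mult_of_line[OF assms] by simp

lemma mult_of_line_off_hyperplane_le:
  assumes "x \<in> vecs N" "y \<in> vecs N" "lin_indep [x, (y :: nat \<Rightarrow> 'a)]"
  shows "mult_of N (\<lambda>P. of_bool (\<exists>v\<in>P. v k \<noteq> 0)) (span_list [x, y]) \<le> 3"
proof -
  have "x k = 0 \<or> y k = 0 \<or> x k + y k = 0 \<or> x k - y k = 0"
    using nonzero_eq_or_opposite[of "x k" "y k"] by auto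
  then show ?thesis
    using mult_of_line[OF assms] by (auto simp: point_of_off_hyperplane_iff)
qed

lemma msize_off_hyperplane: "msize 3 (\<lambda>P. of_bool (\<exists>v\<in>P. v 0 \<noteq> (0::'a))) = 27"
proof -
  have "vec_mult (\<lambda>P. of_bool (\<exists>v\<in>P. v 0 \<noteq> 0)) x = of_bool (x 0 \<noteq> (0::'a))" for x
    by (cases "x = 0") (simp_all add: vec_mult_nonzero point_of_off_hyperplane_iff)
  then have "2 * msize 3 (\<lambda>P. of_bool (\<exists>v\<in>P. v 0 \<noteq> (0::'a))) = card (vecs 3 - {x. x 0 = (0::'a)})"
    by (simp add: double_msize Diff_eq Collect_neg_eq[symmetric])
  also have "\<dots> = card (vecs 3 :: (nat \<Rightarrow> 'a) set) - card {x \<in> vecs 3. x 0 = (0::'a)}"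
    by (subst card_Diff_subset[symmetric]) (auto intro: arg_cong[where f = card])
  also have "\<dots> = 54"
    using card_vecs_vanishing_on[of "{0}" 3, where 'a = 'a] card_UNIV by (simp add: card_vecs)
  finally show ?thesis by simp
qed

lemma griesmer_construction:
  fixes P\<^sub>0 :: "(nat \<Rightarrow> 'a) set" and a b c :: nat
  assumes "P\<^sub>0 \<in> points 3"
  defines "K \<equiv> \<lambda>P. a + b * of_bool (P = P\<^sub>0) + c * of_bool (\<exists>v\<in>P. v 0 \<noteq> 0)"
  shows "bounded_on_subspaces 3 1 K (4 * a + b + 3 * c)" "msize 3 K = 40 * a + b + 27 * c"
proof -
  have K_eq: "K = (\<lambda>P. a * 1 + b * of_bool (P = P\<^sub>0) + c * of_bool (\<exists>v\<in>P. v 0 \<noteq> 0))"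
    by (simp add: K_def)
  have mult_of_K: "mult_of 3 K S = a * mult_of 3 (\<lambda>_. 1) S + b * mult_of 3 (\<lambda>P. of_bool (P = P\<^sub>0)) S
      + c * mult_of 3 (\<lambda>P. of_bool (\<exists>v\<in>P. v 0 \<noteq> 0)) S" for S
    unfolding K_eq by (simp only: mult_of_add mult_of_cmult)
  show "bounded_on_subspaces 3 1 K (4 * a + b + 3 * c)"
    unfolding bounded_on_subspaces_def proj_line_iff
  proof (clarify)
    fix x y :: "nat \<Rightarrow> 'a" assume line: "x \<in> vecs 3" "y \<in> vecs 3" "lin_indep [x, y]"
    show "mult_of 3 K (span_list [x, y]) \<le> 4 * a + b + 3 * c"
      unfolding mult_of_K mult_of_line_uniform[OF line]
      using mult_of_point_indicator_le[of 3 P\<^sub>0 "span_list [x, y]"]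
        mult_of_line_off_hyperplane_le[OF line, of 0]
      by (intro add_mono mult_left_mono) simp_all
  qed
  have "msize 3 (\<lambda>_ :: (nat \<Rightarrow> 'a) set. 1 :: nat) = card (points 3 :: (nat \<Rightarrow> 'a) set set)"
    by (simp add: msize_def)
  then show "msize 3 K = 40 * a + b + 27 * c"
    unfolding K_eq msize_add msize_cmult
    using assms(1) by (simp add: msize_point_indicator msize_off_hyperplane card_points_3)
qed

lemma griesmer_attained:
  assumes "3 \<le> w"
  shows "\<exists>K :: (nat \<Rightarrow> 'a) set \<Rightarrow> nat.
           bounded_on_subspaces 3 1 K w \<and> msize 3 K + 12 * ((w + 3) div 4) = 13 * w"
proof -
  have "points 3 \<noteq> ({} :: (nat \<Rightarrow> 'a) set set)"
    using card_points_3 by auto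
  then obtain P\<^sub>0 :: "(nat \<Rightarrow> 'a) set" where P\<^sub>0: "P\<^sub>0 \<in> points 3"
    by blast
  note construction = griesmer_construction[OF P\<^sub>0]
  define k where "k = w div 4"
  have "w mod 4 < 4" by simp
  then have "w = 4 * k \<or> w = 4 * k + 1 \<or> w = 4 * k + 2 \<or> w = 4 * k + 3"
    using mult_div_mod_eq[of 4 w] unfolding k_def by linarith
  then consider "w = 4 * k" | "w = 4 * k + 1" | "w = 4 * k + 2" | "w = 4 * k + 3"
    by blast
  then show ?thesis
  proof cases
    case 1
    then show ?thesis using construction[of k 0 0] by auto
  next
    case 2
    then show ?thesis using construction[of k 1 0] by auto
  next
    case 3
    with assms have "w = 4 * (k - 1) + 0 + 3 * 2" by auto
    with \<open>w = 4 * k + 2\<close> show ?thesis using construction[of "k - 1" 0 2] by auto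
  next
    case 4
    then show ?thesis using construction[of k 0 1] by auto
  qed
qed

lemma coset_cap_bound:
  fixes a b h :: "nat \<Rightarrow> 'a"
  assumes bounded: "bounded_on_subspaces N 1 K 2"
    and le1: "\<And>P. P \<in> points N \<Longrightarrow> K P \<le> 1"
    and vecs: "a \<in> vecs N" "b \<in> vecs N" "h \<in> vecs N"
    and indep: "lin_indep [a, b, h]"
    and ab: "K (point_of a) = 1" "K (point_of b) = 1"
  shows "(\<Sum>s\<in>UNIV. \<Sum>t\<in>UNIV. vec_mult K (scale s a + scale t b + h)) \<le> 2"
proof -
  define v where "v s t = scale s a + scale t b + h" for s t
  define T where "T = {(s, t). K (point_of (v s t)) = 1}"
  have v_vecs: "v s t \<in> vecs N" for s t
    using vecs by (simp add: v_def)
  have v_comb: "scale \<alpha> (v s t) + scale \<beta> (v s' t')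
      = scale (\<alpha> * s + \<beta> * s') a + scale (\<alpha> * t + \<beta> * t') b + scale (\<alpha> + \<beta>) h" for \<alpha> \<beta> s t s' t'
    by (simp add: v_def fun_eq_iff algebra_simps)
  have v_nonzero: "v s t \<noteq> 0" for s t
  proof -
    have "scale s a + scale t b + scale 1 h \<noteq> 0"
      using indep unfolding lin_indep_triple by (metis one_neq_zero)
    then show ?thesis by (simp add: v_def)
  qed
  have v_indep: "lin_indep [v s t, v s' t']" if "(s, t) \<noteq> (s', t')" for s t s' t'
    unfolding lin_indep_pair
  proof (intro allI impI)
    fix \<alpha> \<beta> assume "scale \<alpha> (v s t) + scale \<beta> (v s' t') = 0"
    then have "\<alpha> * s + \<beta> * s' = 0" "\<alpha> * t + \<beta> * t' = 0" "\<alpha> + \<beta> = 0"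
      using indep unfolding v_comb lin_indep_triple by blast+
    moreover from \<open>\<alpha> + \<beta> = 0\<close> have "\<beta> = - \<alpha>"
      by (simp add: add_eq_0_iff)
    ultimately have "\<alpha> * (s - s') = 0" "\<alpha> * (t - t') = 0"
      by (simp_all add: algebra_simps)
    with \<open>\<beta> = - \<alpha>\<close> that show "\<alpha> = 0 \<and> \<beta> = 0" by auto
  qed
  have weight: "vec_mult K (v s t) = of_bool ((s, t) \<in> T)" for s t
  proof -
    have "K (point_of (v s t)) \<le> 1"
      using le1 v_vecs v_nonzero by (auto simp: points_eq)
    then show ?thesis
      using v_nonzero by (auto simp: vec_mult_nonzero T_def)
  qed
  have chord_zero: "K (point_of (v s t - v s' t')) = 0"
    if "(s, t) \<in> T" "(s', t') \<in> T" "(s, t) \<noteq> (s', t')" for s t s' t'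
    using bounded_on_linesD[OF bounded v_vecs v_vecs v_indep[OF that(3)]] that(1,2) by (simp add: T_def)
  have distinct_coords: "s \<noteq> s' \<and> t \<noteq> t'"
    if "(s, t) \<in> T" "(s', t') \<in> T" "(s, t) \<noteq> (s', t')" for s t s' t'
  proof (intro conjI notI)
    assume "s = s'"
    then have "v s t - v s' t' = scale (t - t') b" "t - t' \<noteq> 0"
      using that(3) by (auto simp: v_def fun_eq_iff algebra_simps)
    then show False
      using chord_zero[OF that] ab(2) by (simp add: point_of_scale)
  next
    assume "t = t'"
    then have "v s t - v s' t' = scale (s - s') a" "s - s' \<noteq> 0"
      using that(3) by (auto simp: v_def fun_eq_iff algebra_simps)
    then show False
      using chord_zero[OF that] ab(1) by (simp add: point_of_scale)
  qed
  have no_three: False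
    if "p\<^sub>1 \<in> T" "p\<^sub>2 \<in> T" "p\<^sub>3 \<in> T" "p\<^sub>1 \<noteq> p\<^sub>2" "p\<^sub>1 \<noteq> p\<^sub>3" "p\<^sub>2 \<noteq> p\<^sub>3" for p\<^sub>1 p\<^sub>2 p\<^sub>3
  proof -
    obtain s\<^sub>1 t\<^sub>1 s\<^sub>2 t\<^sub>2 s\<^sub>3 t\<^sub>3
      where p: "p\<^sub>1 = (s\<^sub>1, t\<^sub>1)" "p\<^sub>2 = (s\<^sub>2, t\<^sub>2)" "p\<^sub>3 = (s\<^sub>3, t\<^sub>3)"
      using prod.exhaust by metis
    note that = that[unfolded p]
    have "s\<^sub>1 + s\<^sub>2 + s\<^sub>3 = 0" "t\<^sub>1 + t\<^sub>2 + t\<^sub>3 = 0"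
      using distinct_coords that by (metis distinct_sum_zero)+
    moreover have "v s\<^sub>1 t\<^sub>1 + v s\<^sub>2 t\<^sub>2 + v s\<^sub>3 t\<^sub>3
        = scale (s\<^sub>1 + s\<^sub>2 + s\<^sub>3) a + scale (t\<^sub>1 + t\<^sub>2 + t\<^sub>3) b + (h + h + h)"
      by (simp add: v_def scale_distrib algebra_simps)
    moreover have "h + h + h = 0"
      by (simp add: fun_eq_iff)
    ultimately have "v s\<^sub>1 t\<^sub>1 + v s\<^sub>2 t\<^sub>2 + v s\<^sub>3 t\<^sub>3 = 0"
      by simp
    then have "v s\<^sub>3 t\<^sub>3 = - (v s\<^sub>1 t\<^sub>1 + v s\<^sub>2 t\<^sub>2)"
      by (metis add_eq_0_iff)
    then have "point_of (v s\<^sub>3 t\<^sub>3) = point_of (v s\<^sub>1 t\<^sub>1 + v s\<^sub>2 t\<^sub>2)"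
      by (simp only: point_of_uminus)
    then have "K (point_of (v s\<^sub>3 t\<^sub>3)) = 0"
      using bounded_on_linesD[OF bounded v_vecs v_vecs v_indep[OF that(4)]] that(1,2) by (simp add: T_def)
    with that(3) show False
      by (simp add: T_def)
  qed
  have "card T \<le> 2"
  proof (rule ccontr)
    assume "\<not> card T \<le> 2"
    then obtain S where "S \<subseteq> T" "card S = 3"
      using obtain_subset_with_card_n[of 3 T] by auto
    then obtain x y z where "{x, y, z} \<subseteq> T" "x \<noteq> y" "y \<noteq> z" "x \<noteq> z"
      unfolding card_3_iff by blast
    then show False
      using no_three[of x y z] by simp
  qed
  have "(\<Sum>s\<in>UNIV. \<Sum>t\<in>UNIV. vec_mult K (scale s a + scale t b + h))
      = (\<Sum>s\<in>UNIV. \<Sum>t\<in>UNIV. of_bool ((s, t) \<in> T))"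
    using weight by (simp add: v_def)
  also have "\<dots> = card T"
    by (subst sum.cartesian_product) simp
  also have "\<dots> \<le> 2"
    by fact
  finally show ?thesis .
qed

lemma cap_bound_through_secant:
  fixes a b :: "nat \<Rightarrow> 'a"
  assumes bounded: "bounded_on_subspaces N 1 K 2"
    and le1: "\<And>P. P \<in> points N \<Longrightarrow> K P \<le> 1"
    and ab: "a \<in> vecs N" "b \<in> vecs N" "lin_indep [a, b]" "K (point_of a) = 1" "K (point_of b) = 1"
  shows "msize N K \<le> 3 ^ (N - 1) + 1"
proof -
  obtain i j where minor: "a i * b j - a j * b i \<noteq> 0"
    using lin_indep_pair_minor[OF ab(3)] by blast
  have ij: "i \<le> N" "j \<le> N" "i \<noteq> j"
  proof -
    have vanish: "a k = 0 \<and> b k = 0" if "N < k" for k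
      using that ab(1,2) by (simp add: vecs_def)
    show "i \<le> N"
      using minor vanish[of i] by (cases "N < i") auto
    show "j \<le> N"
      using minor vanish[of j] by (cases "N < j") auto
    show "i \<noteq> j"
      using minor by auto
  qed
  define H where "H = {h \<in> vecs N. h i = 0 \<and> h j = (0::'a)}"
  define F where "F h = (\<Sum>s\<in>UNIV. \<Sum>t\<in>UNIV. vec_mult K (scale s a + scale t b + h))" for h
  note decomposition = bij_betw_plane_decomposition[OF ab(1,2) ij(1,2) minor, folded H_def]
  have H0: "0 \<in> H" and finH: "finite H"
    by (simp_all add: H_def)
  have "card H = 3 ^ (N - 1)"
    using card_vecs_vanishing_on[of "{i, j}" N, where 'a = 'a] ij card_UNIV by (simp add: H_def)
  then have card_H: "card (H - {0}) = 3 ^ (N - 1) - 1"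
    using H0 finH by (simp add: card_Diff_singleton)
  have "2 * msize N K = (\<Sum>h\<in>H. F h)"
    unfolding double_msize F_def sum_over_decomposition[OF decomposition]
    by (simp add: sum.cartesian_product prod.case_distrib case_prod_app)
  also have "\<dots> = F 0 + (\<Sum>h\<in>H - {0}. F h)"
    using finH H0 by (rule sum.remove)
  finally have msize_eq: "2 * msize N K = F 0 + (\<Sum>h\<in>H - {0}. F h)" .
  have "F 0 = 2 * mult_of N K (span_list [a, b])"
    unfolding F_def using ab(1,2)
    by (simp add: sum_span_list_pair[OF ab(3), symmetric] double_mult_of
        span_list_pair_subset_vecs scale_mem_span_list_pair)
  moreover have "mult_of N K (span_list [a, b]) \<le> 2"
    using bounded_on_linesD[OF bounded ab(1-3)] by (simp add: mult_of_line[OF ab(1-3)])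
  ultimately have F0: "F 0 \<le> 4" by simp
  have "F h \<le> 2" if h: "h \<in> H - {0}" for h
  proof -
    have "lin_indep [a, b, h]" unfolding lin_indep_triple
    proof (intro allI impI)
      fix r s t assume "scale r a + scale s b + scale t h = 0"
      moreover have "scale t h \<in> H"
        using h by (auto simp: H_def)
      ultimately have "((r, s), scale t h) = ((0, 0), 0)"
        by (intro inj_onD[OF bij_betw_imp_inj_on[OF decomposition]]) (simp_all add: H0)
      with h show "r = 0 \<and> s = 0 \<and> t = 0" by simp
    qed
    with h show ?thesis
      unfolding F_def using ab by (intro coset_cap_bound[OF bounded le1]) (auto simp: H_def)
  qed
  then have "(\<Sum>h\<in>H - {0}. F h) \<le> 2 * (3 ^ (N - 1) - 1)"
    using sum_bounded_above[of "H - {0}" F 2] card_H by simp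
  moreover have "1 \<le> (3::nat) ^ (N - 1)" by simp
  ultimately show ?thesis
    using msize_eq F0 by linarith
qed

lemma cap_bound:
  fixes K :: "(nat \<Rightarrow> 'a) set \<Rightarrow> nat"
  assumes bounded: "bounded_on_subspaces N 1 K 2" and "1 \<le> N"
  shows "msize N K \<le> 3 ^ (N - 1) + 1"
proof (cases "\<exists>P\<in>points N. 2 \<le> K P")
  case True
  then obtain u where u: "u \<in> vecs N" "u \<noteq> 0" "2 \<le> K (point_of u)"
    by (auto simp: points_eq)
  have "3 \<le> (3::nat) ^ N"
    using power_increasing[of 1 N "3::nat"] \<open>1 \<le> N\<close> by simp
  then obtain m :: nat where m: "3 ^ N - 1 = m + 2"
    by (intro that[of "3 ^ N - 3"]) simp
  obtain k where k: "K (point_of u) = k + 2"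
    using u(3) by (intro that[of "K (point_of u) - 2"]) simp
  have "2 * msize N K + (m + 2) * (k + 2) \<le> (m + 2) * 2 + 2 * (k + 2)"
    using point_star_bound[OF bounded u(1,2)] m k by simp
  then have "msize N K \<le> 2"
    by (simp add: algebra_simps)
  moreover have "1 \<le> (3::nat) ^ (N - 1)"
    by simp
  ultimately show ?thesis by linarith
next
  case False
  then have le1: "\<And>P. P \<in> points N \<Longrightarrow> K P \<le> 1"
    by fastforce
  define C where "C = {P \<in> points N. K P = 1}"
  show ?thesis
  proof (cases "\<exists>P\<in>C. \<exists>Q\<in>C. P \<noteq> Q")
    case True
    then obtain a b where ab: "a \<in> vecs N" "b \<in> vecs N" "a \<noteq> 0" "b \<noteq> 0"
        "point_of a \<noteq> point_of b" "K (point_of a) = 1" "K (point_of b) = 1"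
      by (auto simp: C_def points_eq)
    then have "lin_indep [a, b]"
      by (simp add: lin_indep_pair_iff_points)
    with ab show ?thesis
      using cap_bound_through_secant[OF bounded le1] by blast
  next
    case False
    have "msize N K = (\<Sum>P\<in>points N. of_bool (K P = 1))"
    proof (unfold msize_def, rule sum.cong)
      fix P :: "(nat \<Rightarrow> 'a) set" assume "P \<in> points N"
      then have "K P \<le> 1" by (rule le1)
      then show "K P = of_bool (K P = 1)" by auto
    qed simp
    also have "\<dots> = card C"
      by (simp add: C_def Int_def)
    also have "\<dots> \<le> 1"
      using False by (simp add: card_le_Suc0_iff_eq C_def)
    finally show ?thesis by simp
  qed
qed

lemma binary_form_zeros_le_2:
  fixes A B C :: 'a
  assumes "\<not> (A = 0 \<and> B = 0 \<and> C = 0)"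
  shows "of_bool (A = 0) + of_bool (C = 0) + of_bool (A + B + C = 0) + of_bool (A - B + C = 0) \<le> (2::nat)"
proof -
  have "A \<in> {0, 1, -1}" "B \<in> {0, 1, -1}" "C \<in> {0, 1, -1}"
    using UNIV_eq by blast+
  with assms show ?thesis
    by (elim insertE emptyE) simp_all
qed

lemma quadric_form_nonzero_on_line:
  assumes "x \<in> vecs 3" "y \<in> vecs 3" and indep: "lin_indep [x, (y :: nat \<Rightarrow> 'a)]"
  shows "\<exists>s t. quadric_form (scale s x + scale t y) \<noteq> 0"
proof (rule ccontr)
  assume "\<not> ?thesis"
  then have zero: "quadric_form (scale s x + scale t y) = 0" for s t
    by blast
  obtain s t where "scale s x + scale t y \<noteq> 0" "(scale s x + scale t y) 2 = 0"
    using line_meets_coordinate_hyperplane[OF indep] by blast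
  moreover define u where "u = scale s x + scale t y"
  ultimately have u: "u \<noteq> 0" "u 2 = 0" "quadric_form u = 0" "u \<in> vecs 3"
    using zero assms(1,2) by simp_all
  obtain s' t' where "scale s' x + scale t' y \<noteq> 0" "(scale s' x + scale t' y) 3 = 0"
    using line_meets_coordinate_hyperplane[OF indep] by blast
  moreover define u' where "u' = scale s' x + scale t' y"
  ultimately have u': "u' \<noteq> 0" "u' 3 = 0" "quadric_form u' = 0" "u' \<in> vecs 3"
    using zero assms(1,2) by simp_all
  have "u 0 * u 0 + u 1 * u 1 = 0" "u' 0 * u' 0 + u' 1 * u' 1 = 0"
    using u(2,3) u'(2,3) by (simp_all add: quadric_form_def)
  then have coords: "u 0 = 0 \<and> u 1 = 0" "u' 0 = 0 \<and> u' 1 = 0"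
    using sum_squares_eq_0 by blast+
  then have "u 3 \<noteq> 0" "u' 2 \<noteq> 0"
    using vec4_eta[OF u(4)] vec4_eta[OF u'(4)] u(1,2) u'(1,2) by auto
  moreover have "quadric_form (u + u') = u' 2 * u 3"
    using coords u(2) u'(2) by (simp add: quadric_form_def)
  moreover have "u + u' = scale (s + s') x + scale (t + t') y"
    by (simp add: u_def u'_def scale_distrib algebra_simps)
  ultimately show False
    using zero by simp
qed

lemma elliptic_quadric_bounded: "bounded_on_subspaces 3 1 (elliptic_quadric :: (nat \<Rightarrow> 'a) set \<Rightarrow> nat) 2"
  unfolding bounded_on_lines_iff
proof (intro ballI impI)
  fix x y :: "nat \<Rightarrow> 'a" assume line: "x \<in> vecs 3" "y \<in> vecs 3" "lin_indep [x, y]"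
  let ?A = "quadric_form x" and ?B = "polar_form x y" and ?C = "quadric_form y"
  have "\<not> (?A = 0 \<and> ?B = 0 \<and> ?C = 0)"
    using quadric_form_nonzero_on_line[OF line] by (auto simp: quadric_form_comb)
  moreover have "quadric_form (x + y) = ?A + ?B + ?C" "quadric_form (x - y) = ?A - ?B + ?C"
    using quadric_form_comb[of 1 x 1 y] quadric_form_comb[of 1 x "-1" y] by simp_all
  ultimately show "elliptic_quadric (point_of x) + elliptic_quadric (point_of y)
      + elliptic_quadric (point_of (x + y)) + elliptic_quadric (point_of (x - y)) \<le> 2"
    using binary_form_zeros_le_2 lin_indep_pair_nonzero[OF line(3)]
    by (simp add: elliptic_quadric_point_of)
qed

lemma card_singular_vectors:
  "20 \<le> card {v \<in> vecs 3. v \<noteq> 0 \<and> quadric_form (v :: nat \<Rightarrow> 'a) = 0}"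
proof -
  define \<phi> :: "'a \<times> 'a \<times> 'a \<Rightarrow> nat \<Rightarrow> 'a"
    where "\<phi> = (\<lambda>(p, q, r). vec4 p q r (- (p * p + q * q) / r))"
  define S\<^sub>1 where "S\<^sub>1 = \<phi> ` (UNIV \<times> UNIV \<times> (UNIV - {0}))"
  define S\<^sub>2 where "S\<^sub>2 = (\<lambda>c. vec4 0 0 0 c) ` (UNIV - {0 :: 'a})"
  have "inj_on \<phi> (UNIV \<times> UNIV \<times> (UNIV - {0}))"
    by (rule inj_onI) (auto simp: \<phi>_def vec4_eq_iff)
  then have "card S\<^sub>1 = 18"
    using card_UNIV by (simp add: S\<^sub>1_def card_image card_cartesian_product card_Diff_singleton)
  moreover have "inj_on (\<lambda>c. vec4 0 0 0 c) (UNIV - {0 :: 'a})"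
    by (rule inj_onI) (simp add: vec4_eq_iff)
  then have "card S\<^sub>2 = 2"
    using card_UNIV by (simp add: S\<^sub>2_def card_image card_Diff_singleton)
  moreover have "S\<^sub>1 \<inter> S\<^sub>2 = {}"
    by (auto simp: S\<^sub>1_def S\<^sub>2_def \<phi>_def vec4_eq_iff)
  ultimately have "card (S\<^sub>1 \<union> S\<^sub>2) = 20"
    by (simp add: card_Un_disjoint S\<^sub>1_def S\<^sub>2_def)
  moreover have "S\<^sub>1 \<union> S\<^sub>2 \<subseteq> {v \<in> vecs 3. v \<noteq> 0 \<and> quadric_form v = 0}"
    by (auto simp: S\<^sub>1_def S\<^sub>2_def \<phi>_def vec4_mem_vecs quadric_form_def vec4_eq_0_iff)
  then have "card (S\<^sub>1 \<union> S\<^sub>2) \<le> card {v \<in> vecs 3. v \<noteq> 0 \<and> quadric_form (v :: nat \<Rightarrow> 'a) = 0}"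
    by (rule card_mono[rotated]) simp
  ultimately show ?thesis by simp
qed

lemma msize_elliptic_quadric: "msize 3 (elliptic_quadric :: (nat \<Rightarrow> 'a) set \<Rightarrow> nat) = 10"
proof -
  have "vec_mult elliptic_quadric v = of_bool (v \<noteq> 0 \<and> quadric_form (v :: nat \<Rightarrow> 'a) = 0)" for v
    by (cases "v = 0") (simp_all add: vec_mult_nonzero elliptic_quadric_point_of)
  then have "2 * msize 3 (elliptic_quadric :: (nat \<Rightarrow> 'a) set \<Rightarrow> nat)
      = card {v \<in> vecs 3. v \<noteq> 0 \<and> quadric_form (v :: nat \<Rightarrow> 'a) = 0}"
    by (simp add: double_msize Int_def)
  then have "10 \<le> msize 3 (elliptic_quadric :: (nat \<Rightarrow> 'a) set \<Rightarrow> nat)"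
    using card_singular_vectors by simp
  moreover have "msize 3 (elliptic_quadric :: (nat \<Rightarrow> 'a) set \<Rightarrow> nat) \<le> 10"
    using cap_bound[OF elliptic_quadric_bounded] by simp
  ultimately show ?thesis by simp
qed

end

theorem mainTheorem10:
  assumes "card (UNIV :: 'a::{field,finite} set) = 3"
  shows "(\<forall>w::nat. w \<ge> 3 \<longrightarrow> int (m_max TYPE('a) 1 3 w) = griesmer_ub 3 1 3 w)
         \<and> m_max TYPE('a) 1 3 2 = 10"
proof (intro conjI allI impI)
  interpret gf3 "TYPE('a)"
    using assms by unfold_locales
  fix w :: nat assume "3 \<le> w"
  obtain K :: "(nat \<Rightarrow> 'a) set \<Rightarrow> nat"
    where "bounded_on_subspaces 3 1 K w" "msize 3 K + 12 * ((w + 3) div 4) = 13 * w"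
    using griesmer_attained[OF \<open>3 \<le> w\<close>] by blast
  moreover have "msize 3 L \<le> 13 * w - 12 * ((w + 3) div 4)"
    if "bounded_on_subspaces 3 1 L w" for L :: "(nat \<Rightarrow> 'a) set \<Rightarrow> nat"
    using msize_le_griesmer[OF that] by simp
  ultimately have "m_max TYPE('a) 1 3 w = 13 * w - 12 * ((w + 3) div 4)"
    by (intro m_max_eqI) auto
  then show "int (m_max TYPE('a) 1 3 w) = griesmer_ub 3 1 3 w"
    unfolding griesmer_ub_3_1_3 by simp
next
  interpret gf3 "TYPE('a)"
    using assms by unfold_locales
  show "m_max TYPE('a) 1 3 2 = 10"
    using cap_bound[of 3] by (intro m_max_eqI[OF _ elliptic_quadric_bounded msize_elliptic_quadric]) simp
qed

end
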